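(* Let $G_1$ and $G_2$ be groups, and for $t=1,2$ let $\vec H^{(t)}\colon\{1\}=H^{(t)}_0\triangleleft\dots\triangleleft H^{(t)}_n=G_t$ and $\vec K^{(t)}\colon\{1\}=K^{(t)}_0\triangleleft\dots\triangleleft K^{(t)}_n=G_t$ be composition series of $G_t$ (of the same length $n$). Let $\pi_t$ be the unique permutation of $\{1,\dots,n\}$ such that $H^{(t)}_i/H^{(t)}_{i-1}$ is subnormally down-and-up projective to $K^{(t)}_{\pi_t(i)}/K^{(t)}_{\pi_t(i)-1}$ for all $i$. If $\pi_1=\pi_2$, then the lattices $(\mathrm{CSL}(\vec H^{(1)},\vec K^{(1)});\subseteq)$ and $(\mathrm{CSL}(\vec H^{(2)},\vec K^{(2)});\subseteq)$ are isomorphic. That is, this permutation determines $\mathrm{CSL}(\vec H,\vec K)$ up to lattice isomorphism.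
   Context: For composition series $\vec H$, $\vec K$ of a group $G$, $\mathrm{CSL}(\vec H,\vec K)=\{H_i\cap K_j: 0\le i,j\le n\}$, ordered by inclusion; it is a lattice. For subnormal subgroups $A\triangleleft B$ and $C\triangleleft D$ of $G$, $B/A$ is subnormally down-and-up projective to $D/C$ if there are subnormal subgroups $X\triangleleft Y$ of $G$ with $AY=B$, $A\cap Y=X$, $CY=D$, $C\cap Y=X$. It is known (and used here) that for composition series $\vec H,\vec K$ of the same group there is a unique permutation $\pi$ of $\{1,\dots,n\}$ such that $H_i/H_{i-1}$ is subnormally down-and-up projective to $K_{\pi(i)}/K_{\pi(i)-1}$ for all $i$. *)

theory Defs
  imports "HOL-Algebra.Algebra" "HOL-Combinatorics.Permutations"
begin

definition simple_grp :: "('a, 'b) monoid_scheme \<Rightarrow> bool" where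
  "simple_grp G \<longleftrightarrow> group G \<and> carrier G \<noteq> {\<one>\<^bsub>G\<^esub>} \<and>
     (\<forall>N. N \<lhd> G \<longrightarrow> N = {\<one>\<^bsub>G\<^esub>} \<or> N = carrier G)"

definition comp_series :: "('a, 'b) monoid_scheme \<Rightarrow> (nat \<Rightarrow> 'a set) \<Rightarrow> nat \<Rightarrow> bool" where
  "comp_series G H n \<longleftrightarrow>
     H 0 = {\<one>\<^bsub>G\<^esub>} \<and> H n = carrier G \<and>
     (\<forall>i<n. subgroup (H (Suc i)) G \<and> H i \<lhd> (G\<lparr>carrier := H (Suc i)\<rparr>) \<and>
            simple_grp ((G\<lparr>carrier := H (Suc i)\<rparr>) Mod (H i)))"

definition subnormal :: "('a, 'b) monoid_scheme \<Rightarrow> 'a set \<Rightarrow> bool" where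
  "subnormal G Xs \<longleftrightarrow> (\<exists>Ch k. Ch 0 = Xs \<and> Ch k = carrier G \<and>
     (\<forall>i<k. subgroup (Ch (Suc i)) G \<and> Ch i \<lhd> (G\<lparr>carrier := Ch (Suc i)\<rparr>)))"

text \<open>For subnormal A normal in B and C normal in D: B/A is subnormally
  down-and-up projective to D/C.\<close>
definition sdu_proj :: "('a, 'b) monoid_scheme \<Rightarrow> 'a set \<Rightarrow> 'a set \<Rightarrow> 'a set \<Rightarrow> 'a set \<Rightarrow> bool" where
  "sdu_proj G A B C D \<longleftrightarrow> (\<exists>Xs Ys. subnormal G Xs \<and> subnormal G Ys \<and>
      Xs \<lhd> (G\<lparr>carrier := Ys\<rparr>) \<and>
      A <#>\<^bsub>G\<^esub> Ys = B \<and> A \<inter> Ys = Xs \<and> C <#>\<^bsub>G\<^esub> Ys = D \<and> C \<inter> Ys = Xs)"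

definition CSL :: "(nat \<Rightarrow> 'a set) \<Rightarrow> (nat \<Rightarrow> 'a set) \<Rightarrow> nat \<Rightarrow> 'a set set" where
  "CSL H K n = {H i \<inter> K j | i j. i \<le> n \<and> j \<le> n}"

text \<open>Isomorphism of (set-)lattices ordered by inclusion: an order isomorphism,
  which for lattices is the same as a lattice isomorphism.\<close>
definition incl_lattice_iso :: "'a set set \<Rightarrow> 'c set set \<Rightarrow> bool" where
  "incl_lattice_iso L M \<longleftrightarrow> (\<exists>f. bij_betw f L M \<and>
     (\<forall>A\<in>L. \<forall>B\<in>L. A \<subseteq> B \<longleftrightarrow> f A \<subseteq> f B))"

end

theory Submission
  imports Defs
begin

text \<open>For composition series \<open>H\<close>, \<open>K\<close> and \<open>i \<in> {1..n}\<close>, let \<open>\<sigma> i\<close> be the least \<open>j\<close>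
  such that \<open>H i \<inter> K j\<close> is not contained in \<open>H (i - 1)\<close>. A Zassenhaus-type argument shows
  that this matching of the factors is symmetric in \<open>H\<close> and \<open>K\<close>, so \<open>\<sigma>\<close> is injective;
  subnormal down-and-up projectivity of \<open>H i / H (i - 1)\<close> to \<open>K (\<pi> i) / K (\<pi> i - 1)\<close> gives
  \<open>\<sigma> \<le> \<pi>\<close> pointwise, hence \<open>\<sigma> = \<pi>\<close>. Thus \<open>H i \<inter> K j \<subseteq> H (i - 1)\<close> iff \<open>j < \<pi> i\<close>, and
  telescoping along both series, \<open>H i \<inter> K j \<subseteq> H i' \<inter> K j'\<close> iff \<open>j < \<pi> s\<close> for all
  \<open>i' < s \<le> i\<close> and \<open>i < \<pi>\<inverse> t\<close> for all \<open>j' < t \<le> j\<close>. This criterion depends on \<open>\<pi>\<close> only,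
  so \<open>H\<^sub>1 i \<inter> K\<^sub>1 j \<mapsto> H\<^sub>2 i \<inter> K\<^sub>2 j\<close> is a well-defined order isomorphism.\<close>

lemma set_mult_memI: "h \<in> A \<Longrightarrow> k \<in> B \<Longrightarrow> h \<otimes>\<^bsub>G\<^esub> k \<in> A <#>\<^bsub>G\<^esub> B"
  unfolding set_mult_def by blast

lemma set_mult_memE:
  assumes "x \<in> A <#>\<^bsub>G\<^esub> B"
  obtains h k where "h \<in> A" "k \<in> B" "x = h \<otimes>\<^bsub>G\<^esub> k"
  using assms unfolding set_mult_def by blast

text \<open>Both maps have the same sum over \<open>S\<close>.\<close>

lemma inj_endo_le_permutation_eq:
  fixes \<sigma> \<pi> :: "'a \<Rightarrow> 'a :: ordered_cancel_comm_monoid_add"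
  assumes "finite S" "inj_on \<sigma> S" "\<sigma> ` S \<subseteq> S" "\<pi> permutes S"
    and le: "\<And>x. x \<in> S \<Longrightarrow> \<sigma> x \<le> \<pi> x" and x: "x \<in> S"
  shows "\<sigma> x = \<pi> x"
proof (rule sum_mono_inv[OF _ le x \<open>finite S\<close>])
  have "sum \<sigma> S = sum id (\<sigma> ` S)" using sum.reindex[OF \<open>inj_on \<sigma> S\<close>, of id] by simp
  also have "\<dots> = sum id (\<pi> ` S)"
    using endo_inj_surj[OF assms(1,3,2)] permutes_image[OF assms(4)] by simp
  also have "\<dots> = sum \<pi> S" using sum.reindex[OF permutes_inj_on[OF assms(4)], of id] by simp
  finally show "sum \<sigma> S = sum \<pi> S" .
qed

lemma chain_inter_subset_iff:
  fixes H :: "nat \<Rightarrow> 'a set"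
  assumes mono: "\<And>a b. a \<le> b \<Longrightarrow> b \<le> n \<Longrightarrow> H a \<subseteq> H b"
    and step: "\<And>s. s \<in> {1..n} \<Longrightarrow> H s \<inter> K \<subseteq> H (s - 1) \<longleftrightarrow> P s"
    and i: "i \<le> n" and i': "i' \<le> n"
  shows "H i \<inter> K \<subseteq> H i' \<longleftrightarrow> (\<forall>s\<in>{i'<..i}. P s)"
  using i
proof (induction i)
  case 0
  then show ?case using mono[of 0 i'] i' by auto
next
  case (Suc k)
  show ?case
  proof (cases "Suc k \<le> i'")
    case True
    then show ?thesis using mono[of "Suc k" i'] i' by auto
  next
    case False
    then have "{i'<..Suc k} = insert (Suc k) {i'<..k}" by auto
    then have "(\<forall>s\<in>{i'<..Suc k}. P s) \<longleftrightarrow> P (Suc k) \<and> (\<forall>s\<in>{i'<..k}. P s)" by simp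
    moreover have "H k \<subseteq> H (Suc k)" "H i' \<subseteq> H k" using mono Suc.prems False by auto
    moreover have "H (Suc k) \<inter> K \<subseteq> H k \<longleftrightarrow> P (Suc k)" using step[of "Suc k"] Suc.prems by simp
    moreover have "H k \<inter> K \<subseteq> H i' \<longleftrightarrow> (\<forall>s\<in>{i'<..k}. P s)" using Suc by simp
    ultimately show ?thesis by blast
  qed
qed

lemma incl_lattice_iso_image:
  assumes "\<And>x y. x \<in> I \<Longrightarrow> y \<in> I \<Longrightarrow> f x \<subseteq> f y \<longleftrightarrow> g x \<subseteq> g y"
  shows "incl_lattice_iso (f ` I) (g ` I)"
proof -
  define F where "F Z = g (SOME x. x \<in> I \<and> f x = Z)" for Z
  have F: "F (f x) = g x" if x: "x \<in> I" for x
  proof -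
    define y where "y = (SOME y. y \<in> I \<and> f y = f x)"
    have "\<exists>y. y \<in> I \<and> f y = f x" using x by blast
    then have "y \<in> I \<and> f y = f x" unfolding y_def by (rule someI_ex)
    then have "g y \<subseteq> g x" "g x \<subseteq> g y" using assms[of x y] assms[of y x] x by auto
    then show ?thesis unfolding F_def y_def[symmetric] by (rule subset_antisym)
  qed
  have ord: "\<forall>A\<in>f ` I. \<forall>B\<in>f ` I. A \<subseteq> B \<longleftrightarrow> F A \<subseteq> F B" using assms F by auto
  moreover have "inj_on F (f ` I)" using ord by (intro inj_onI) blast
  moreover have "F ` f ` I = g ` I" using F by (auto simp: image_image)
  ultimately show ?thesis unfolding incl_lattice_iso_def bij_betw_def by blast
qed

lemma CSL_eq_image: "CSL H K n = (\<lambda>(i, j). H i \<inter> K j) ` ({..n} \<times> {..n})"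
  unfolding CSL_def by auto

lemma sdu_proj_sym: "sdu_proj G A B C D \<Longrightarrow> sdu_proj G C D A B"
  unfolding sdu_proj_def by blast

lemma sdu_proj_inv_perm:
  assumes pp: "\<pi> permutes {1..n}"
    and sdu: "\<forall>i\<in>{1..n}. sdu_proj G (H (i - 1)) (H i) (K (\<pi> i - 1)) (K (\<pi> i))"
  shows "\<forall>j\<in>{1..n}. sdu_proj G (K (j - 1)) (K j) (H (inv_into UNIV \<pi> j - 1)) (H (inv_into UNIV \<pi> j))"
proof
  fix j assume "j \<in> {1..n}"
  then have "inv_into UNIV \<pi> j \<in> {1..n}" using permutes_in_image[OF permutes_inv[OF pp]] by blast
  then show "sdu_proj G (K (j - 1)) (K j) (H (inv_into UNIV \<pi> j - 1)) (H (inv_into UNIV \<pi> j))"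
    using sdu_proj_sym sdu permutes_inverses(1)[OF pp] by metis
qed

text \<open>As \<open>K\<close> is increasing, \<open>factor_partner H K i j\<close> says that \<open>j\<close> is the least index with
  \<open>H i \<inter> K j\<close> not contained in \<open>H (i - 1)\<close>: the map \<open>\<sigma>\<close> of the proof idea.\<close>

definition factor_partner :: "(nat \<Rightarrow> 'a set) \<Rightarrow> (nat \<Rightarrow> 'a set) \<Rightarrow> nat \<Rightarrow> nat \<Rightarrow> bool" where
  "factor_partner H K i j \<longleftrightarrow> \<not> H i \<inter> K j \<subseteq> H (i - 1) \<and> H i \<inter> K (j - 1) \<subseteq> H (i - 1)"

context group
begin

lemma subset_set_mult_left:
  assumes "\<one> \<in> B" "A \<subseteq> carrier G" shows "A \<subseteq> A <#> B"
proof
  fix x assume x: "x \<in> A"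
  then have "x \<otimes> \<one> \<in> A <#> B" using assms(1) by (rule set_mult_memI)
  then show "x \<in> A <#> B" using x assms(2) by auto
qed

lemma subset_set_mult_right:
  assumes "\<one> \<in> A" "B \<subseteq> carrier G" shows "B \<subseteq> A <#> B"
proof
  fix x assume x: "x \<in> B"
  with assms(1) have "\<one> \<otimes> x \<in> A <#> B" by (rule set_mult_memI)
  then show "x \<in> A <#> B" using x assms(2) by auto
qed

lemma set_mult_subset_subgroup:
  assumes "subgroup C G" "A \<subseteq> C" "B \<subseteq> C" shows "A <#> B \<subseteq> C"
  using assms by (auto elim!: set_mult_memE intro: subgroup.m_closed)

lemma subgroup_subset_set_mult_commute:
  assumes M: "subgroup M G" and A: "subgroup A G" and B: "subgroup B G" and sub: "M \<subseteq> A <#> B"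
  shows "M \<subseteq> B <#> A"
proof
  fix x assume x: "x \<in> M"
  then have "inv x \<in> A <#> B" using sub subgroup.m_inv_closed[OF M] by blast
  then obtain a b where ab: "a \<in> A" "b \<in> B" "inv x = a \<otimes> b" by (rule set_mult_memE)
  have carr: "x \<in> carrier G" "a \<in> carrier G" "b \<in> carrier G"
    using subgroup.mem_carrier[OF M x] subgroup.mem_carrier[OF A ab(1)]
      subgroup.mem_carrier[OF B ab(2)] by simp_all
  have "x = inv (inv x)" using carr by simp
  also have "\<dots> = inv b \<otimes> inv a" using ab(3) carr by (simp add: inv_mult_group)
  finally have "x = inv b \<otimes> inv a" .
  moreover have "inv b \<otimes> inv a \<in> B <#> A"
    using subgroup.m_inv_closed[OF B ab(2)] subgroup.m_inv_closed[OF A ab(1)]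
    by (rule set_mult_memI)
  ultimately show "x \<in> B <#> A" by simp
qed

lemma subnormal_subset_carrier:
  assumes "subnormal G Y" shows "Y \<subseteq> carrier G"
proof -
  obtain Ch k where ch: "Ch 0 = Y" "Ch k = carrier G"
    "\<forall>i<k. subgroup (Ch (Suc i)) G \<and> Ch i \<lhd> (G\<lparr>carrier := Ch (Suc i)\<rparr>)"
    using assms unfolding subnormal_def by blast
  show ?thesis
  proof (cases k)
    case 0 then show ?thesis using ch by simp
  next
    case (Suc k')
    then have "subgroup (Ch 1) G" "Ch 0 \<lhd> (G\<lparr>carrier := Ch 1\<rparr>)" using ch(3) by auto
    then show ?thesis using ch(1) normal_imp_subgroup[THEN subgroup.subset] subgroup.subset
      by fastforce
  qed
qed

lemma simple_quotient_imp_neq_carrier: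
  assumes "H \<lhd> G" and "simple_grp (G Mod H)"
  shows "H \<noteq> carrier G"
proof
  assume H: "H = carrier G"
  have "carrier (G Mod H) = {H}"
    using subgroup.rcos_const[OF subgroup_self group_axioms] rcos_self[OF _ subgroup_self]
    unfolding FactGroup_def RCOSETS_def H by auto
  then show False using assms(2) unfolding simple_grp_def by (simp add: FactGroup_def)
qed

lemma simple_quotient_maximal:
  assumes H: "H \<lhd> G" and simple: "simple_grp (G Mod H)"
    and N: "N \<lhd> G" and HN: "H \<subseteq> N"
  shows "N = H \<or> N = carrier G"
proof -
  interpret H: normal H G by (rule H)
  interpret N: normal N G by (rule N)
  let ?q = "\<lambda>a. H #> a"
  have hom: "group_hom G (G Mod H) ?q"
    using H.r_coset_hom_Mod H.factorgroup_is_group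
    unfolding group_hom_def group_hom_axioms_def by (simp add: group_axioms)
  have surj: "?q ` carrier G = carrier (G Mod H)"
    by (auto simp add: FactGroup_def RCOSETS_def)
  have "?q ` N \<lhd> G Mod H" by (rule N.surj_hom_normal_subgroup[OF hom surj])
  then consider "?q ` N = {\<one>\<^bsub>G Mod H\<^esub>}" | "?q ` N = carrier (G Mod H)"
    using simple unfolding simple_grp_def by blast
  then show ?thesis
  proof cases
    case 1
    have "N \<subseteq> H"
    proof
      fix x assume x: "x \<in> N"
      then have "H #> x = H" using 1 by (auto simp add: FactGroup_def)
      then show "x \<in> H" using rcos_self[OF N.mem_carrier[OF x] H.subgroup_axioms] by simp
    qed
    then show ?thesis using HN by blast
  next
    case 2
    have "carrier G \<subseteq> N"
    proof
      fix y assume y: "y \<in> carrier G"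
      then obtain x where x: "x \<in> N" "H #> y = H #> x" using 2 surj by (metis imageE imageI)
      have "y \<in> H #> x" using rcos_self[OF y H.subgroup_axioms] x(2) by simp
      then obtain h where "h \<in> H" "y = h \<otimes> x" unfolding r_coset_def by auto
      then show "y \<in> N" using HN x(1) N.m_closed by auto
    qed
    then show ?thesis using N.subset by blast
  qed
qed

lemma comp_series_subgroup:
  assumes "comp_series G H n" and "i \<le> n"
  shows "subgroup (H i) G"
  using assms triv_subgroup unfolding comp_series_def by (cases i) auto

lemma comp_series_step:
  assumes "comp_series G H n" and "i < n"
  shows "H i \<lhd> G\<lparr>carrier := H (Suc i)\<rparr>" and "simple_grp (G\<lparr>carrier := H (Suc i)\<rparr> Mod H i)"
  using assms unfolding comp_series_def by auto

lemma comp_series_mono: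
  assumes cs: "comp_series G H n" and "i \<le> i'" "i' \<le> n"
  shows "H i \<subseteq> H i'"
  using assms(2,3)
proof (induction i' rule: dec_induct)
  case (step m)
  have "subgroup (H m) (G\<lparr>carrier := H (Suc m)\<rparr>)"
    using comp_series_step(1)[OF cs, of m] step by (simp add: normal_imp_subgroup)
  then show ?case using step subgroup.subset by fastforce
qed simp

lemma comp_series_strict:
  assumes cs: "comp_series G H n" and "i < n"
  shows "H i \<noteq> H (Suc i)"
  using group.simple_quotient_imp_neq_carrier[OF subgroup_imp_group comp_series_step[OF cs]]
    comp_series_subgroup[OF cs] assms(2) by simp

lemma comp_series_maximal:
  assumes cs: "comp_series G H n" and "i < n"
    and "N \<lhd> G\<lparr>carrier := H (Suc i)\<rparr>" and "H i \<subseteq> N"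
  shows "N = H i \<or> N = H (Suc i)"
  using group.simple_quotient_maximal[OF subgroup_imp_group comp_series_step[OF cs] assms(3,4)]
    comp_series_subgroup[OF cs] assms(2) by simp

text \<open>Downward induction on \<open>m\<close>: by Zassenhaus' \<open>preliminary2\<close>, \<open>H i <#> (H (Suc i) \<inter> K m)\<close>
  is normal in \<open>H i <#> (H (Suc i) \<inter> K (Suc m))\<close>, which is \<open>H (Suc i)\<close> by induction, and it
  contains \<open>H i\<close>; maximality of \<open>H i\<close> in \<open>H (Suc i)\<close> leaves only the two extreme cases.\<close>

lemma comp_series_join:
  assumes csH: "comp_series G H n" and csK: "comp_series G K n"
    and i: "i < n" and m: "m \<le> n" and not_sub: "\<not> H (Suc i) \<inter> K m \<subseteq> H i"
  shows "H i <#> (H (Suc i) \<inter> K m) = H (Suc i)"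
  using m not_sub
proof (induction m rule: inc_induct)
  case base
  have "H (Suc i) \<inter> K n = H (Suc i)"
    using csK comp_series_subgroup[OF csH, of "Suc i"] i subgroup.subset
    unfolding comp_series_def by auto
  moreover have "H i <#> H (Suc i) = H (Suc i)"
  proof
    have "subgroup (H i) G" "subgroup (H (Suc i)) G" using comp_series_subgroup[OF csH] i by auto
    then show "H (Suc i) \<subseteq> H i <#> H (Suc i)"
      by (intro subset_set_mult_right subgroup.one_closed subgroup.subset)
    show "H i <#> H (Suc i) \<subseteq> H (Suc i)"
      using \<open>subgroup (H (Suc i)) G\<close> comp_series_mono[OF csH, of i "Suc i"] i
      by (intro set_mult_subset_subgroup) auto
  qed
  ultimately show ?case by simp
next
  case (step m)
  let ?M = "H (Suc i) \<inter> K m"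
  have sH: "subgroup (H i) G" "subgroup (H (Suc i)) G" and sK: "subgroup (K (Suc m)) G"
    using comp_series_subgroup csH csK i step.hyps by auto
  have "\<not> H (Suc i) \<inter> K (Suc m) \<subseteq> H i"
    using step.prems comp_series_mono[OF csK, of m "Suc m"] step.hyps by auto
  then have "H i <#> (H (Suc i) \<inter> K (Suc m)) = H (Suc i)" by (rule step.IH)
  then have "H i <#> ?M \<lhd> G\<lparr>carrier := H (Suc i)\<rparr>"
    using preliminary2[OF sH(2) comp_series_step(1)[OF csH i] sK comp_series_step(1)[OF csK]]
      step.hyps by simp
  moreover have sM: "subgroup ?M G"
    using sH comp_series_subgroup[OF csK, of m] step.hyps subgroups_Inter_pair by simp
  ultimately have "H i <#> ?M = H i \<or> H i <#> ?M = H (Suc i)"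
    using comp_series_maximal[OF csH i]
      subset_set_mult_left[OF subgroup.one_closed[OF sM] subgroup.subset[OF sH(1)]] by blast
  then show ?case
    using subset_set_mult_right[OF subgroup.one_closed[OF sH(1)] subgroup.subset[OF sM]] step.prems
    by auto
qed

lemma factor_partner_iff_not_subset_set_mult:
  assumes csH: "comp_series G H n" and csK: "comp_series G K n"
    and i: "i \<in> {1..n}" and j: "j \<in> {1..n}"
  shows "factor_partner H K i j \<longleftrightarrow>
    \<not> H i \<inter> K j \<subseteq> (H (i - 1) \<inter> K j) <#> (H i \<inter> K (j - 1))"
proof -
  let ?A = "H (i - 1) \<inter> K j" and ?B = "H i \<inter> K (j - 1)"
  have sH: "subgroup (H i) G" "subgroup (H (i - 1)) G"
    and sK: "subgroup (K j) G" "subgroup (K (j - 1)) G"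
    using comp_series_subgroup csH csK i j by auto
  have sA: "subgroup ?A G" and sB: "subgroup ?B G"
    using sH sK subgroups_Inter_pair by auto
  have K_step: "K (j - 1) \<subseteq> K j" using comp_series_mono[OF csK] j by simp
  show ?thesis
  proof
    assume "factor_partner H K i j"
    moreover then have "?A <#> ?B \<subseteq> H (i - 1)"
      unfolding factor_partner_def by (intro set_mult_subset_subgroup[OF sH(2)]) auto
    ultimately show "\<not> H i \<inter> K j \<subseteq> ?A <#> ?B" unfolding factor_partner_def by blast
  next
    assume not_sub: "\<not> H i \<inter> K j \<subseteq> ?A <#> ?B"
    have "\<not> H i \<inter> K j \<subseteq> H (i - 1)"
      using not_sub subset_set_mult_left[OF subgroup.one_closed[OF sB] subgroup.subset[OF sA]]
      by blast
    moreover have "?B \<subseteq> H (i - 1)"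
    proof (rule ccontr)
      assume "\<not> ?B \<subseteq> H (i - 1)"
      moreover have "i - 1 < n" "j - 1 \<le> n" "Suc (i - 1) = i" using i j by auto
      ultimately have join: "H (i - 1) <#> ?B = H i"
        using comp_series_join[OF csH csK, of "i - 1" "j - 1"] by simp
      have "H i \<inter> K j \<subseteq> ?A <#> ?B"
      proof
        fix x assume x: "x \<in> H i \<inter> K j"
        then have "x \<in> H (i - 1) <#> ?B" using join by simp
        then obtain h u where hu: "h \<in> H (i - 1)" "u \<in> ?B" "x = h \<otimes> u"
          by (rule set_mult_memE)
        have carr: "h \<in> carrier G" "u \<in> carrier G"
          using subgroup.mem_carrier[OF sH(2) hu(1)] subgroup.mem_carrier[OF sK(2)] hu(2) by auto
        have "h = x \<otimes> inv u" using hu(3) carr by (simp add: m_assoc)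
        moreover have "x \<otimes> inv u \<in> K j"
          using x hu(2) K_step sK(1) by (auto intro: subgroup.m_closed subgroup.m_inv_closed)
        ultimately have "h \<in> ?A" using hu(1) by simp
        then show "x \<in> ?A <#> ?B" using hu(2,3) by (simp add: set_mult_memI)
      qed
      then show False using not_sub by contradiction
    qed
    ultimately show "factor_partner H K i j" unfolding factor_partner_def by blast
  qed
qed

lemma factor_partner_sym:
  assumes csH: "comp_series G H n" and csK: "comp_series G K n"
    and i: "i \<in> {1..n}" and j: "j \<in> {1..n}"
  shows "factor_partner H K i j \<longleftrightarrow> factor_partner K H j i"
proof -
  let ?M = "H i \<inter> K j" and ?A = "H (i - 1) \<inter> K j" and ?B = "H i \<inter> K (j - 1)"
  have "subgroup (H i) G" "subgroup (H (i - 1)) G" "subgroup (K j) G" "subgroup (K (j - 1)) G"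
    using comp_series_subgroup csH csK i j by auto
  then have "subgroup ?M G" "subgroup ?A G" "subgroup ?B G"
    using subgroups_Inter_pair by auto
  then have "?M \<subseteq> ?A <#> ?B \<longleftrightarrow> ?M \<subseteq> ?B <#> ?A"
    using subgroup_subset_set_mult_commute by blast
  moreover have "K j \<inter> H i = ?M" "K (j - 1) \<inter> H i = ?B" "K j \<inter> H (i - 1) = ?A" by auto
  ultimately show ?thesis
    using factor_partner_iff_not_subset_set_mult[OF csH csK i j]
      factor_partner_iff_not_subset_set_mult[OF csK csH j i] by simp
qed

lemma factor_partner_unique:
  assumes csK: "comp_series G K n" and j: "j \<in> {1..n}" and j': "j' \<in> {1..n}"
    and "factor_partner H K i j" and "factor_partner H K i j'"
  shows "j = j'"
proof (rule ccontr)
  have below: "K k \<subseteq> K (k' - 1)" if "k < k'" "k' \<le> n" for k k'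
    using comp_series_mono[OF csK, of k "k' - 1"] that by simp
  assume "j \<noteq> j'"
  then have "K j \<subseteq> K (j' - 1) \<or> K j' \<subseteq> K (j - 1)"
    using below j j' by (meson atLeastAtMost_iff linorder_neqE_nat)
  then show False using assms(4,5) unfolding factor_partner_def by blast
qed

lemma factor_partner_exists:
  assumes csH: "comp_series G H n" and csK: "comp_series G K n"
    and i: "i \<in> {1..n}" and not_sub: "\<not> H i \<inter> K b \<subseteq> H (i - 1)"
  shows "\<exists>j\<in>{1..b}. factor_partner H K i j"
proof -
  define j where "j = (LEAST j. \<not> H i \<inter> K j \<subseteq> H (i - 1))"
  have jP: "\<not> H i \<inter> K j \<subseteq> H (i - 1)" unfolding j_def using not_sub by (rule LeastI)
  have jb: "j \<le> b" unfolding j_def using not_sub by (rule Least_le)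
  have "i - 1 \<le> n" using i by auto
  then have "\<one> \<in> H (i - 1)" using comp_series_subgroup[OF csH] subgroup.one_closed by blast
  then have "j \<noteq> 0" using jP csK unfolding comp_series_def by auto
  moreover have "H i \<inter> K (j - 1) \<subseteq> H (i - 1)"
  proof -
    have "j - 1 < j" using \<open>j \<noteq> 0\<close> by simp
    then have "\<not> \<not> H i \<inter> K (j - 1) \<subseteq> H (i - 1)" unfolding j_def by (rule not_less_Least)
    then show ?thesis by simp
  qed
  ultimately show ?thesis using jP jb unfolding factor_partner_def by force
qed

lemma sdu_proj_not_subset:
  assumes csH: "comp_series G H n" and csK: "comp_series G K n"
    and i: "i \<in> {1..n}" and b: "b \<in> {1..n}"
    and sdu: "sdu_proj G (H (i - 1)) (H i) (K (b - 1)) (K b)"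
  shows "\<not> H i \<inter> K b \<subseteq> H (i - 1)"
proof -
  obtain Y where Y: "subnormal G Y" "H (i - 1) <#> Y = H i" "K (b - 1) <#> Y = K b"
    using sdu unfolding sdu_proj_def by blast
  have sH: "subgroup (H (i - 1)) G" and sK: "subgroup (K (b - 1)) G"
    using comp_series_subgroup csH csK i b by auto
  have "Y \<subseteq> carrier G" using subnormal_subset_carrier[OF Y(1)] .
  then have "Y \<subseteq> H (i - 1) <#> Y" "Y \<subseteq> K (b - 1) <#> Y"
    using subset_set_mult_right subgroup.one_closed[OF sH] subgroup.one_closed[OF sK] by auto
  then have "Y \<subseteq> H i \<inter> K b" using Y by auto
  moreover have "\<not> Y \<subseteq> H (i - 1)"
  proof
    assume "Y \<subseteq> H (i - 1)"
    then have "H i \<subseteq> H (i - 1)"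
      using set_mult_subset_subgroup[OF sH] Y(2) by blast
    moreover have "i - 1 < n" "Suc (i - 1) = i" using i by auto
    ultimately show False
      using comp_series_strict[OF csH, of "i - 1"] comp_series_mono[OF csH, of "i - 1" i] by auto
  qed
  ultimately show ?thesis by blast
qed

lemma factor_partner_perm:
  assumes csH: "comp_series G H n" and csK: "comp_series G K n"
    and pp: "\<pi> permutes {1..n}"
    and sdu: "\<forall>i\<in>{1..n}. sdu_proj G (H (i - 1)) (H i) (K (\<pi> i - 1)) (K (\<pi> i))"
    and i: "i \<in> {1..n}"
  shows "factor_partner H K i (\<pi> i)"
proof -
  let ?S = "{1..n}"
  have "\<exists>j\<in>{1..\<pi> k}. factor_partner H K k j" if k: "k \<in> ?S" for k
    using factor_partner_exists[OF csH csK k] sdu_proj_not_subset[OF csH csK k] sdu k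
      permutes_in_image[OF pp] by blast
  then obtain \<sigma> where \<sigma>: "\<And>k. k \<in> ?S \<Longrightarrow> \<sigma> k \<in> {1..\<pi> k} \<and> factor_partner H K k (\<sigma> k)"
    by metis
  have "\<sigma> k \<in> ?S" if "k \<in> ?S" for k
    using \<sigma>[OF that] permutes_in_image[OF pp, of k] that by auto
  then have \<sigma>_S: "\<sigma> ` ?S \<subseteq> ?S" by blast
  have "inj_on \<sigma> ?S"
  proof (rule inj_onI)
    fix k k' assume k: "k \<in> ?S" and k': "k' \<in> ?S" and eq: "\<sigma> k = \<sigma> k'"
    have "\<sigma> k \<in> ?S" using \<sigma>_S k by blast
    moreover have "factor_partner H K k (\<sigma> k)" "factor_partner H K k' (\<sigma> k)"
      using \<sigma> k k' eq by metis+
    ultimately have "factor_partner K H (\<sigma> k) k" "factor_partner K H (\<sigma> k) k'"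
      using factor_partner_sym[OF csH csK] k k' by blast+
    then show "k = k'" using factor_partner_unique[OF csH] k k' by blast
  qed
  then have "\<sigma> i = \<pi> i"
    using inj_endo_le_permutation_eq[OF _ _ \<sigma>_S pp _ i] \<sigma> by auto
  then show ?thesis using \<sigma>[OF i] by simp
qed

lemma comp_series_inter_subset_prev_iff:
  assumes csH: "comp_series G H n" and csK: "comp_series G K n"
    and pp: "\<pi> permutes {1..n}"
    and sdu: "\<forall>i\<in>{1..n}. sdu_proj G (H (i - 1)) (H i) (K (\<pi> i - 1)) (K (\<pi> i))"
    and i: "i \<in> {1..n}" and j: "j \<le> n"
  shows "H i \<inter> K j \<subseteq> H (i - 1) \<longleftrightarrow> j < \<pi> i"
proof -
  have partner: "factor_partner H K i (\<pi> i)" by (rule factor_partner_perm[OF csH csK pp sdu i])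
  have "\<pi> i \<in> {1..n}" using permutes_in_image[OF pp] i by blast
  then have "j < \<pi> i \<Longrightarrow> K j \<subseteq> K (\<pi> i - 1)" and "\<pi> i \<le> j \<Longrightarrow> K (\<pi> i) \<subseteq> K j"
    using comp_series_mono[OF csK] j by auto
  then show ?thesis
    using partner unfolding factor_partner_def by (meson not_le subset_trans inf_mono order_refl)
qed

lemma comp_series_inter_subset_iff:
  assumes csH: "comp_series G H n" and csK: "comp_series G K n"
    and pp: "\<pi> permutes {1..n}"
    and sdu: "\<forall>i\<in>{1..n}. sdu_proj G (H (i - 1)) (H i) (K (\<pi> i - 1)) (K (\<pi> i))"
    and le: "i \<le> n" "j \<le> n" "i' \<le> n" "j' \<le> n"
  shows "H i \<inter> K j \<subseteq> H i' \<inter> K j' \<longleftrightarrow>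
    (\<forall>s\<in>{i'<..i}. j < \<pi> s) \<and> (\<forall>t\<in>{j'<..j}. i < inv_into UNIV \<pi> t)"
proof -
  have "H i \<inter> K j \<subseteq> H i' \<longleftrightarrow> (\<forall>s\<in>{i'<..i}. j < \<pi> s)"
    by (rule chain_inter_subset_iff[where n = n])
      (use comp_series_mono[OF csH] comp_series_inter_subset_prev_iff[OF csH csK pp sdu] le in auto)
  moreover have "K j \<inter> H i \<subseteq> K j' \<longleftrightarrow> (\<forall>t\<in>{j'<..j}. i < inv_into UNIV \<pi> t)"
    by (rule chain_inter_subset_iff[where n = n])
      (use comp_series_mono[OF csK] comp_series_inter_subset_prev_iff[OF csK csH
        permutes_inv[OF pp] sdu_proj_inv_perm[OF pp sdu]] le in auto)
  ultimately show ?thesis by blast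
qed

end

theorem corollary3p4:
  fixes G1 :: "('a, 'b) monoid_scheme" and G2 :: "('c, 'd) monoid_scheme"
    and H1 K1 :: "nat \<Rightarrow> 'a set" and H2 K2 :: "nat \<Rightarrow> 'c set"
    and n :: nat and \<pi> :: "nat \<Rightarrow> nat"
  assumes "group G1" and "group G2"
    and "comp_series G1 H1 n" and "comp_series G1 K1 n"
    and "comp_series G2 H2 n" and "comp_series G2 K2 n"
    and "\<pi> permutes {1..n}"
    and "\<forall>i\<in>{1..n}. sdu_proj G1 (H1 (i - 1)) (H1 i) (K1 (\<pi> i - 1)) (K1 (\<pi> i))"
    and "\<forall>i\<in>{1..n}. sdu_proj G2 (H2 (i - 1)) (H2 i) (K2 (\<pi> i - 1)) (K2 (\<pi> i))"
  shows "incl_lattice_iso (CSL H1 K1 n) (CSL H2 K2 n)"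
proof -
  have iff: "H1 i \<inter> K1 j \<subseteq> H1 i' \<inter> K1 j' \<longleftrightarrow> H2 i \<inter> K2 j \<subseteq> H2 i' \<inter> K2 j'"
    if "i \<le> n" "j \<le> n" "i' \<le> n" "j' \<le> n" for i j i' j'
    using group.comp_series_inter_subset_iff[OF assms(1,3,4,7,8) that]
      group.comp_series_inter_subset_iff[OF assms(2,5,6,7,9) that] by simp
  show ?thesis unfolding CSL_eq_image
    by (rule incl_lattice_iso_image)
      (auto simp only: split_paired_all mem_Sigma_iff atMost_iff prod.case iff)
qed

end
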